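(* Let $0=X_0<\dots<X_K=1$ be a mesh of $K\ge1$ elements, each carrying $p+1$ Gauss–Lobatto nodes ($p\ge1$), with $N+1=Kp+1$ global nodes, global unknown vector $\mathbf{U}=(\bar u_0,\dots,\bar u_N)^T$ and restriction matrices $R_e$. Let $a\ge0$ be constant and let $\varepsilon_j(t)\ge0$, $j=0,\dots,N$, be continuous global nodal diffusion coefficients; set $\mathcal{E}^e=\mathrm{diag}(R_e(\varepsilon_0,\dots,\varepsilon_N)^T)$. Define the assembled matrices $$\mathcal{P}=\sum_e R_e^T\mathcal{P}^eR_e,\quad \mathcal{Q}_x=\sum_eR_e^T\mathcal{Q}_x^eR_e,\quad \mathcal{A}=\sum_eR_e^T(\sqrt{\mathcal{E}^e}\mathcal{D}_x^e)^T\mathcal{P}^e(\sqrt{\mathcal{E}^e}\mathcal{D}_x^e)R_e,$$ and let $\delta_0:=(\mathcal{D}_x^1R_1\mathbf{U})_0$ and $\delta_N:=(\mathcal{D}_x^KR_K\mathbf{U})_p$ (the discrete derivatives at $x=0$ and $x=1$ from the first and last element). Let $\mathbf{U}(t)$ be a $C^1$ solution of $$\mathcal{P}\frac{d\mathbf{U}}{dt}+a\mathcal{Q}_x\mathbf{U}=-\mathcal{A}\mathbf{U}-\varepsilon_0\delta_0E_0+\varepsilon_N\delta_NE_N+\sigma_0E_0\big[a\bar u_0-\varepsilon_0\delta_0-g_0\big]+\sigma_NE_N\big[-\varepsilon_N\delta_N-g_N\big],$$ where $E_0,E_N$ are the first and last standard unit vectors of $\mathbb{R}^{N+1}$. If $\sigma_0=-1$,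 $\sigma_N=1$ and $g_0=g_N=0$, then for all $t\ge0$ $$\mathbf{U}(t)^T\mathcal{P}\mathbf{U}(t)+2\int_0^t\sum_{e=1}^K\big(\sqrt{\mathcal{E}^e}\mathcal{D}_x^eR_e\mathbf{U}\big)^T\mathcal{P}^e\big(\sqrt{\mathcal{E}^e}\mathcal{D}_x^eR_e\mathbf{U}\big)\,ds\le\mathbf{U}(0)^T\mathcal{P}\mathbf{U}(0).$$ That is, the energy stability of the single-element scheme is retained after continuous Galerkin merging of elements.
   Context: For element $e=[X_{e-1},X_e]$ with Gauss–Lobatto nodes $x^e_0<\dots<x^e_p$ (endpoints included), positive weights $w^e_k$ and degree-$p$ Lagrange basis $\ell^e_j$: $\mathcal{P}^e=\mathrm{diag}(w^e_0,\dots,w^e_p)$, $(\mathcal{Q}_x^e)_{ij}=\int_{X_{e-1}}^{X_e}\ell^e_i(\ell^e_j)'dx$, $\mathcal{D}_x^e=(\mathcal{P}^e)^{-1}\mathcal{Q}_x^e$. Global nodes are numbered left to right, local node $j$ of element $e$ is global node $(e-1)p+j$, and $R_e\in\mathbb{R}^{(p+1)\times(N+1)}$ is the Boolean matrix selecting those global entries. $\sqrt{\cdot}$ of a nonnegative diagonal matrix is taken entrywise. *)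

theory Defs
  imports "HOL-Analysis.Analysis" "HOL-Computational_Algebra.Polynomial"
begin

text \<open>Inner index runs over 0..n (i.e. inner dimension n+1).\<close>
definition mmul :: "nat \<Rightarrow> (nat \<Rightarrow> nat \<Rightarrow> real) \<Rightarrow> (nat \<Rightarrow> nat \<Rightarrow> real) \<Rightarrow> nat \<Rightarrow> nat \<Rightarrow> real" where
  "mmul n A B = (\<lambda>i j. \<Sum>k\<le>n. A i k * B k j)"

definition mvec :: "nat \<Rightarrow> (nat \<Rightarrow> nat \<Rightarrow> real) \<Rightarrow> (nat \<Rightarrow> real) \<Rightarrow> nat \<Rightarrow> real" where
  "mvec n A v = (\<lambda>i. \<Sum>k\<le>n. A i k * v k)"

definition dotp :: "nat \<Rightarrow> (nat \<Rightarrow> real) \<Rightarrow> (nat \<Rightarrow> real) \<Rightarrow> real" where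
  "dotp n u v = (\<Sum>k\<le>n. u k * v k)"

definition transp :: "(nat \<Rightarrow> nat \<Rightarrow> real) \<Rightarrow> nat \<Rightarrow> nat \<Rightarrow> real" where
  "transp A = (\<lambda>i j. A j i)"

definition diagm :: "(nat \<Rightarrow> real) \<Rightarrow> nat \<Rightarrow> nat \<Rightarrow> real" where
  "diagm d = (\<lambda>i j. if i = j then d i else 0)"

text \<open>Entrywise square root (used for nonnegative diagonal matrices).\<close>
definition msqrt :: "(nat \<Rightarrow> nat \<Rightarrow> real) \<Rightarrow> nat \<Rightarrow> nat \<Rightarrow> real" where
  "msqrt M = (\<lambda>i j. sqrt (M i j))"

definition unitv :: "nat \<Rightarrow> nat \<Rightarrow> real" where
  "unitv i = (\<lambda>j. if j = i then 1 else 0)"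

text \<open>Legendre polynomial via Rodrigues' formula.\<close>
definition legendre :: "nat \<Rightarrow> real poly" where
  "legendre n = smult (1 / (2 ^ n * fact n)) ((pderiv ^^ n) ([:-1, 0, 1:] ^ n))"

definition gll_ref_node :: "nat \<Rightarrow> nat \<Rightarrow> real" where
  "gll_ref_node p k =
     sorted_list_of_set ({-1, 1} \<union> {\<xi>. poly (pderiv (legendre p)) \<xi> = 0}) ! k"

definition gll_ref_weight :: "nat \<Rightarrow> nat \<Rightarrow> real" where
  "gll_ref_weight p k =
     2 / (real p * (real p + 1) * (poly (legendre p) (gll_ref_node p k))\<^sup>2)"

definition elem_node :: "nat \<Rightarrow> (nat \<Rightarrow> real) \<Rightarrow> nat \<Rightarrow> nat \<Rightarrow> real" where
  "elem_node p X e k = X (e - 1) + (gll_ref_node p k + 1) / 2 * (X e - X (e - 1))"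

definition elem_weight :: "nat \<Rightarrow> (nat \<Rightarrow> real) \<Rightarrow> nat \<Rightarrow> nat \<Rightarrow> real" where
  "elem_weight p X e k = (X e - X (e - 1)) / 2 * gll_ref_weight p k"

definition lagr :: "nat \<Rightarrow> (nat \<Rightarrow> real) \<Rightarrow> nat \<Rightarrow> nat \<Rightarrow> real poly" where
  "lagr p X e j = (\<Prod>m\<in>{0..p} - {j}.
      smult (1 / (elem_node p X e j - elem_node p X e m)) [:- elem_node p X e m, 1:])"

definition Pe :: "nat \<Rightarrow> (nat \<Rightarrow> real) \<Rightarrow> nat \<Rightarrow> nat \<Rightarrow> nat \<Rightarrow> real" where
  "Pe p X e = diagm (elem_weight p X e)"

definition Qe :: "nat \<Rightarrow> (nat \<Rightarrow> real) \<Rightarrow> nat \<Rightarrow> nat \<Rightarrow> nat \<Rightarrow> real" where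
  "Qe p X e = (\<lambda>i j. integral {X (e - 1) .. X e}
       (\<lambda>x. poly (lagr p X e i) x * poly (pderiv (lagr p X e j)) x))"

text \<open>D = P^{-1} Q (P diagonal, so P^{-1} = diag of inverses).\<close>
definition De :: "nat \<Rightarrow> (nat \<Rightarrow> real) \<Rightarrow> nat \<Rightarrow> nat \<Rightarrow> nat \<Rightarrow> real" where
  "De p X e = mmul p (diagm (\<lambda>k. inverse (elem_weight p X e k))) (Qe p X e)"

text \<open>Boolean restriction matrix R_e, size (p+1) x (N+1): local j of element e is global (e-1)p+j.\<close>
definition Rsel :: "nat \<Rightarrow> nat \<Rightarrow> nat \<Rightarrow> nat \<Rightarrow> real" where
  "Rsel p e = (\<lambda>j g. if g = (e - 1) * p + j then 1 else 0)"

definition Ee :: "nat \<Rightarrow> nat \<Rightarrow> (nat \<Rightarrow> real) \<Rightarrow> nat \<Rightarrow> nat \<Rightarrow> nat \<Rightarrow> real" where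
  "Ee K p eps e = diagm (mvec (K * p) (Rsel p e) eps)"

definition SDe :: "nat \<Rightarrow> nat \<Rightarrow> (nat \<Rightarrow> real) \<Rightarrow> (nat \<Rightarrow> real) \<Rightarrow> nat \<Rightarrow> nat \<Rightarrow> nat \<Rightarrow> real" where
  "SDe K p X eps e = mmul p (msqrt (Ee K p eps e)) (De p X e)"

definition assemble :: "nat \<Rightarrow> nat \<Rightarrow> (nat \<Rightarrow> nat \<Rightarrow> nat \<Rightarrow> real) \<Rightarrow> nat \<Rightarrow> nat \<Rightarrow> real" where
  "assemble K p M = (\<lambda>i j. \<Sum>e\<in>{1..K}.
      mmul p (transp (Rsel p e)) (mmul p (M e) (Rsel p e)) i j)"

definition Pglob :: "nat \<Rightarrow> nat \<Rightarrow> (nat \<Rightarrow> real) \<Rightarrow> nat \<Rightarrow> nat \<Rightarrow> real" where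
  "Pglob K p X = assemble K p (Pe p X)"

definition Qglob :: "nat \<Rightarrow> nat \<Rightarrow> (nat \<Rightarrow> real) \<Rightarrow> nat \<Rightarrow> nat \<Rightarrow> real" where
  "Qglob K p X = assemble K p (Qe p X)"

definition Aglob :: "nat \<Rightarrow> nat \<Rightarrow> (nat \<Rightarrow> real) \<Rightarrow> (nat \<Rightarrow> real) \<Rightarrow> nat \<Rightarrow> nat \<Rightarrow> real" where
  "Aglob K p X eps = assemble K p
     (\<lambda>e. mmul p (transp (SDe K p X eps e)) (mmul p (Pe p X e) (SDe K p X eps e)))"

definition elem_diss :: "nat \<Rightarrow> nat \<Rightarrow> (nat \<Rightarrow> real) \<Rightarrow> (nat \<Rightarrow> real) \<Rightarrow> (nat \<Rightarrow> real) \<Rightarrow> nat \<Rightarrow> real" where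
  "elem_diss K p X eps U e =
     (let v = mvec p (SDe K p X eps e) (mvec (K * p) (Rsel p e) U)
      in dotp p v (mvec p (Pe p X e) v))"

end

theory Submission
  imports Defs
begin

text \<open>Test the scheme with \<open>U\<close>. The assembled mass matrix is diagonal, so the energy
  \<open>U\<^sup>T P U\<close> has derivative \<open>2 U\<^sup>T P U'\<close>. On each element, \<open>v\<^sup>T Q\<^sup>e v = \<integral> q q' = (v\<^sub>p\<^sup>2 - v\<^sub>0\<^sup>2)/2\<close>
  for the Lagrange interpolant \<open>q\<close> of \<open>v\<close>, because the Gauss--Lobatto nodes are distinct and
  contain the element end points (the interior ones are the \<open>p - 1\<close> roots of \<open>P\<^sub>p'\<close>, which lie
  in \<open>(-1, 1)\<close> by repeated Rolle on \<open>(x\<^sup>2 - 1)\<^sup>p\<close>). Neighbouring elements share their interface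
  node, so these contributions telescope to \<open>(u\<^sub>N\<^sup>2 - u\<^sub>0\<^sup>2)/2\<close>; \<open>U\<^sup>T A U\<close> is the element
  dissipation, and the chosen penalties cancel the diffusive boundary fluxes. Hence the time
  derivative of energy plus twice the accumulated dissipation is \<open>-a (u\<^sub>N\<^sup>2 + u\<^sub>0\<^sup>2) \<le> 0\<close>.\<close>

lemma poly_Rolle:
  fixes q :: "real poly"
  assumes "a < b" "poly q a = 0" "poly q b = 0"
  shows "\<exists>z. a < z \<and> z < b \<and> poly (pderiv q) z = 0"
proof -
  have "continuous_on {a..b} (poly q)" by (intro continuous_intros)
  moreover have "\<And>x. poly q differentiable (at x)"
    using poly_DERIV real_differentiable_def by blast
  ultimately obtain z where "a < z" "z < b" "DERIV (poly q) z :> 0"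
    using Rolle[of a b "poly q"] assms by auto
  with DERIV_unique poly_DERIV show ?thesis by blast
qed

lemma sorted_list_of_set_first_last:
  fixes S :: "'a::linorder set"
  assumes "finite S" "S \<noteq> {}"
  shows "sorted_list_of_set S ! 0 = Min S" "sorted_list_of_set S ! (card S - 1) = Max S"
proof -
  define xs where "xs = sorted_list_of_set S"
  have xs: "sorted xs" "set xs = S" "length xs = card S"
    using assms unfolding xs_def by auto
  have len: "0 < length xs" using xs assms by auto
  have bounds: "xs ! 0 \<le> y \<and> y \<le> xs ! (card S - 1)" if "y \<in> S" for y
  proof -
    have "y \<in> set xs" using that xs(2) by simp
    then obtain i where "i < length xs" "y = xs ! i" by (auto simp: in_set_conv_nth)
    then show ?thesis
      using xs(1,3) sorted_nth_mono[OF xs(1), of 0 i] sorted_nth_mono[OF xs(1), of i "card S - 1"]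
      by auto
  qed
  have mem: "xs ! 0 \<in> S" "xs ! (card S - 1) \<in> S"
    using xs(2,3) len by (metis nth_mem diff_less zero_less_one)+
  show "sorted_list_of_set S ! 0 = Min S"
    unfolding xs_def[symmetric] using assms bounds mem by (intro Min_eqI[symmetric]) auto
  show "sorted_list_of_set S ! (card S - 1) = Max S"
    unfolding xs_def[symmetric] using assms bounds mem by (intro Max_eqI[symmetric]) auto
qed

lemma roots_pderiv_between:
  fixes q :: "real poly"
  assumes "finite S" "\<And>x. x \<in> S \<Longrightarrow> poly q x = 0"
  shows "\<exists>T. finite T \<and> card T = card S - 1 \<and> T \<subseteq> {Min S<..<Max S} \<and>
           (\<forall>x\<in>T. poly (pderiv q) x = 0)"
  using assms
proof (induction "card S" arbitrary: S)
  case 0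
  then show ?case by (intro exI[of _ "{}"]) auto
next
  case (Suc n)
  show ?case
  proof (cases "n = 0")
    case True
    then show ?thesis using Suc by (intro exI[of _ "{}"]) auto
  next
    case False
    define m where "m = Max S"
    define S' where "S' = S - {m}"
    have mS: "m \<in> S" unfolding m_def using Suc(2,3) by (metis Max_in card.empty nat.distinct(1))
    have S': "finite S'" "card S' = n"
      unfolding S'_def using Suc(2,3) mS by auto
    then have "S' \<noteq> {}" using False by auto
    obtain T' where T': "finite T'" "card T' = n - 1" "T' \<subseteq> {Min S'<..<Max S'}"
      "\<forall>x\<in>T'. poly (pderiv q) x = 0"
      using Suc(1)[of S'] S' Suc(4) unfolding S'_def by auto
    have "Max S' \<in> S'" using S' \<open>S' \<noteq> {}\<close> by simp
    then have "Max S' < m" "poly q (Max S') = 0"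
      using Suc(3,4) unfolding S'_def m_def by (auto simp: order.strict_iff_order)
    moreover have "poly q m = 0" using mS Suc(4) by simp
    ultimately obtain z where z: "Max S' < z" "z < m" "poly (pderiv q) z = 0"
      using poly_Rolle by blast
    have "Min S \<le> Min S'"
      using S' \<open>S' \<noteq> {}\<close> Suc(3) unfolding S'_def by (simp add: Min_antimono)
    moreover have "Min S' \<le> Max S'" using S' \<open>S' \<noteq> {}\<close> by simp
    moreover have "z \<notin> T'" using T'(3) z(1) by auto
    ultimately show ?thesis
      using T' z S' Suc(2) False unfolding m_def
      by (intro exI[of _ "insert z T'"]) (auto simp: subset_iff)
  qed
qed

lemma power_Suc_dvd_imp_power_dvd_pderiv:
  fixes g q :: "'a::idom poly"
  assumes "g ^ Suc m dvd q"
  shows "g ^ m dvd pderiv q"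
proof -
  obtain h where h: "q = g ^ Suc m * h" using assms by (auto elim: dvdE)
  have "pderiv q = g ^ m * (smult (of_nat (Suc m)) (pderiv g * h) + g * pderiv h)"
    unfolding h pderiv_mult pderiv_power_Suc by (simp add: algebra_simps)
  then show ?thesis by simp
qed

lemma power_dvd_higher_pderiv_power:
  fixes g :: "'a::idom poly"
  shows "k \<le> n \<Longrightarrow> g ^ (n - k) dvd (pderiv ^^ k) (g ^ n)"
proof (induction k)
  case (Suc k)
  then have "g ^ Suc (n - Suc k) dvd (pderiv ^^ k) (g ^ n)"
    by (simp add: Suc_diff_Suc)
  then show ?case using power_Suc_dvd_imp_power_dvd_pderiv by simp
qed simp

lemma poly_higher_pderiv_power_eq_0:
  fixes g :: "'a::idom poly"
  assumes "k < n" "poly g x = 0"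
  shows "poly ((pderiv ^^ k) (g ^ n)) x = 0"
proof -
  have "g dvd g ^ (n - k)" using assms(1) by (simp add: dvd_power)
  then have "g dvd (pderiv ^^ k) (g ^ n)"
    using power_dvd_higher_pderiv_power[of k n g] assms(1) dvd_trans by fastforce
  then show ?thesis using assms(2) by (auto elim: dvdE)
qed

text \<open>Rolle's theorem applied \<open>k\<close> times, the endpoint roots \<open>a, b\<close> surviving each
  differentiation up to order \<open>n - 1\<close>.\<close>
lemma higher_pderiv_power_roots:
  fixes g :: "real poly"
  assumes "a < b" "poly g a = 0" "poly g b = 0"
  shows "k \<le> n \<Longrightarrow> \<exists>R. finite R \<and> card R = k \<and> R \<subseteq> {a<..<b} \<and>
           (\<forall>x\<in>R. poly ((pderiv ^^ k) (g ^ n)) x = 0)"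
proof (induction k)
  case (Suc k)
  then obtain R where R: "finite R" "card R = k" "R \<subseteq> {a<..<b}"
     "\<forall>x\<in>R. poly ((pderiv ^^ k) (g ^ n)) x = 0" by auto
  define S where "S = insert a (insert b R)"
  have "a \<notin> R" "b \<notin> R" using R(3) by auto
  then have S: "finite S" "card S = Suc (Suc k)"
    using R assms(1) unfolding S_def by auto
  have S_bounds: "Min S = a" "Max S = b"
    using S R(3) assms(1) unfolding S_def by (intro Min_eqI Max_eqI; force)+
  have "\<forall>x\<in>S. poly ((pderiv ^^ k) (g ^ n)) x = 0"
    using R assms Suc(2) poly_higher_pderiv_power_eq_0[of k n g] unfolding S_def by auto
  then show ?case
    using roots_pderiv_between[of S "(pderiv ^^ k) (g ^ n)"] S S_bounds by auto
qed (intro exI[of _ "{}"], simp)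

lemma legendre_pderiv_roots:
  assumes p: "p \<ge> 1"
  defines "Z \<equiv> {\<xi>. poly (pderiv (legendre p)) \<xi> = 0}"
  shows "finite Z" "card Z = p - 1" "Z \<subseteq> {-1<..<1}"
proof -
  let ?q = "pderiv ((pderiv ^^ p) ([:-1, 0, 1:] ^ p)) :: real poly"
  have Z: "Z = {\<xi>. poly ?q \<xi> = 0}"
    unfolding Z_def legendre_def by (simp add: pderiv_smult)
  have deg: "degree ?q = p - 1"
    by (simp add: degree_pderiv degree_higher_pderiv degree_power_eq)
  then have "?q \<noteq> 0" using p by (simp add: pderiv_eq_0_iff degree_higher_pderiv degree_power_eq)
  then have fin: "finite Z" and card_le: "card Z \<le> p - 1"
    unfolding Z using poly_roots_finite card_poly_roots_bound[of ?q] deg by auto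
  then show "finite Z" by simp
  obtain R :: "real set" where R: "finite R" "card R = p" "R \<subseteq> {-1<..<1}"
     "\<forall>x\<in>R. poly ((pderiv ^^ p) ([:-1, 0, 1:] ^ p)) x = 0"
    using higher_pderiv_power_roots[of "-1" 1 "[:-1, 0, 1:]" p p] by auto
  then have "R \<noteq> {}" using p by auto
  obtain T where T: "finite T" "card T = p - 1" "T \<subseteq> {Min R<..<Max R}"
    "\<forall>x\<in>T. poly ?q x = 0"
    using roots_pderiv_between[of R "(pderiv ^^ p) ([:-1, 0, 1:] ^ p)"] R by auto
  have "T \<subseteq> Z" using T(4) unfolding Z by auto
  with fin T(2) card_le have "T = Z" by (metis card_seteq)
  moreover have "{Min R<..<Max R} \<subseteq> {-1<..<1}"
    using R(1,3) \<open>R \<noteq> {}\<close> Min_in Max_in by fastforce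
  ultimately show "card Z = p - 1" "Z \<subseteq> {-1<..<1}" using T by auto
qed

lemma gll_ref_node:
  assumes p: "p \<ge> 1"
  shows "gll_ref_node p 0 = -1" "gll_ref_node p p = 1"
    and "i < j \<Longrightarrow> j \<le> p \<Longrightarrow> gll_ref_node p i < gll_ref_node p j"
proof -
  define S where "S = {-1, 1} \<union> {\<xi>. poly (pderiv (legendre p)) \<xi> = 0}"
  note Z = legendre_pderiv_roots[OF p]
  have S: "finite S" "card S = p + 1" "S \<noteq> {}"
    using Z p unfolding S_def by (auto simp: card_insert_if subset_iff)
  have "Min S = -1" "Max S = 1"
    using S Z(3) unfolding S_def by (intro Min_eqI Max_eqI; force)+
  then show "gll_ref_node p 0 = -1" "gll_ref_node p p = 1"
    using sorted_list_of_set_first_last[OF S(1,3)] S(2)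
    unfolding gll_ref_node_def S_def[symmetric] by simp_all
  assume "i < j" "j \<le> p"
  then show "gll_ref_node p i < gll_ref_node p j"
    using sorted_wrt_nth_less[OF strict_sorted_list_of_set[of S]] S(1,2)
    unfolding gll_ref_node_def S_def[symmetric] by simp
qed

lemma elem_node:
  assumes p: "p \<ge> 1" and X: "X (e - 1) < X e"
  shows "elem_node p X e 0 = X (e - 1)" "elem_node p X e p = X e"
    and "i < j \<Longrightarrow> j \<le> p \<Longrightarrow> elem_node p X e i < elem_node p X e j"
proof -
  show "elem_node p X e 0 = X (e - 1)" "elem_node p X e p = X e"
    unfolding elem_node_def using gll_ref_node[OF p] by auto
  assume "i < j" "j \<le> p"
  then have "gll_ref_node p i < gll_ref_node p j" using gll_ref_node(3)[OF p] by blast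
  then show "elem_node p X e i < elem_node p X e j"
    unfolding elem_node_def using X by (simp add: divide_strict_right_mono mult_strict_right_mono)
qed

lemma poly_lagr_elem_node:
  assumes p: "p \<ge> 1" and X: "X (e - 1) < X e" and "j \<le> p" "m \<le> p"
  shows "poly (lagr p X e j) (elem_node p X e m) = (if m = j then 1 else 0)"
proof -
  have distinct: "elem_node p X e j - elem_node p X e k \<noteq> 0" if "k \<le> p" "k \<noteq> j" for k
    using elem_node(3)[OF p X, of j k] elem_node(3)[OF p X, of k j] that \<open>j \<le> p\<close>
    by (cases "k < j") auto
  have "poly (lagr p X e j) (elem_node p X e m) =
      (\<Prod>k\<in>{0..p} - {j}. (elem_node p X e m - elem_node p X e k) /
                          (elem_node p X e j - elem_node p X e k))"
    unfolding lagr_def poly_prod by (intro prod.cong refl) (simp add: diff_divide_distrib)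
  also have "\<dots> = (if m = j then 1 else 0)"
  proof (cases "m = j")
    case True
    then show ?thesis using distinct by simp
  next
    case False
    then show ?thesis using \<open>m \<le> p\<close> by (auto simp: prod_zero_iff intro!: bexI[of _ m])
  qed
  finally show ?thesis .
qed

lemma poly_lagr_interpolant_elem_node:
  assumes p: "p \<ge> 1" and X: "X (e - 1) < X e" and "m \<le> p"
  shows "poly (\<Sum>i\<le>p. smult (v i) (lagr p X e i)) (elem_node p X e m) = v m"
  using poly_lagr_elem_node[OF p X _ \<open>m \<le> p\<close>] \<open>m \<le> p\<close>
  by (simp add: poly_sum if_distrib[of "\<lambda>x. _ * x"] cong: if_cong)

lemma pderiv_sum: "pderiv (sum f A) = (\<Sum>x\<in>A. pderiv (f x))"
  using higher_pderiv_sum[of 1 f A] by simp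

lemma poly_mult_pderiv_has_integral:
  fixes q :: "real poly"
  assumes "a \<le> b"
  shows "((\<lambda>x. poly q x * poly (pderiv q) x) has_integral ((poly q b)\<^sup>2 - (poly q a)\<^sup>2) / 2) {a..b}"
proof -
  have "((\<lambda>x. (poly q x)\<^sup>2 / 2) has_real_derivative poly q x * poly (pderiv q) x) (at x within {a..b})"
    for x
    by (rule DERIV_subset[OF _ subset_UNIV]) (auto intro!: derivative_eq_intros)
  then show ?thesis
    using fundamental_theorem_of_calculus[OF assms, of "\<lambda>x. (poly q x)\<^sup>2 / 2"]
    by (simp add: has_real_derivative_iff_has_vector_derivative[symmetric] diff_divide_distrib)
qed

lemma Qe_quadratic_form:
  assumes p: "p \<ge> 1" and X: "X (e - 1) < X e"
  shows "dotp p v (mvec p (Qe p X e) v) = ((v p)\<^sup>2 - (v 0)\<^sup>2) / 2"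
proof -
  define l where "l = lagr p X e"
  define q where "q = (\<Sum>i\<le>p. smult (v i) (l i))"
  have "((\<lambda>x. poly (l i) x * poly (pderiv (l j)) x) has_integral Qe p X e i j) {X (e - 1)..X e}"
    for i j
    unfolding Qe_def l_def by (intro integrable_integral integrable_continuous_real continuous_intros)
  then have Q: "((\<lambda>x. \<Sum>i\<le>p. \<Sum>j\<le>p. v i * v j * (poly (l i) x * poly (pderiv (l j)) x))
      has_integral (\<Sum>i\<le>p. \<Sum>j\<le>p. v i * v j * Qe p X e i j)) {X (e - 1)..X e}"
    by (intro has_integral_sum finite_atMost has_integral_mult_right)
  have "(\<lambda>x. poly q x * poly (pderiv q) x) =
      (\<lambda>x. \<Sum>i\<le>p. \<Sum>j\<le>p. v i * v j * (poly (l i) x * poly (pderiv (l j)) x))"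
    unfolding q_def pderiv_sum poly_sum pderiv_smult poly_smult sum_product
    by (intro ext sum.cong refl) (simp add: algebra_simps)
  from this poly_mult_pderiv_has_integral[OF less_imp_le[OF X], of q]
  have "(\<Sum>i\<le>p. \<Sum>j\<le>p. v i * v j * Qe p X e i j) =
      ((poly q (X e))\<^sup>2 - (poly q (X (e - 1)))\<^sup>2) / 2"
    using has_integral_unique[OF Q] by simp
  moreover have "poly q (X (e - 1)) = v 0" "poly q (X e) = v p"
    using poly_lagr_interpolant_elem_node[OF p X, of _ v] elem_node(1,2)[OF p X]
    unfolding q_def l_def by (metis le0, metis order_refl)
  ultimately show ?thesis
    unfolding dotp_def mvec_def sum_distrib_left by (simp add: algebra_simps)
qed

lemma mvec_mmul: "mvec n (mmul m A B) v = mvec m A (mvec n B v)"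
  unfolding mvec_def mmul_def
  by (auto simp: sum_distrib_left sum_distrib_right algebra_simps intro!: ext sum.swap[THEN trans])

lemma dotp_mvec_transp: "dotp n u (mvec m (transp A) w) = dotp m (mvec n A u) w"
  unfolding dotp_def mvec_def transp_def
  by (auto simp: sum_distrib_left sum_distrib_right algebra_simps intro!: sum.swap[THEN trans])

lemma mvec_sum: "mvec n (\<lambda>i j. \<Sum>e\<in>E. M e i j) v i = (\<Sum>e\<in>E. mvec n (M e) v i)"
  unfolding mvec_def by (simp add: sum_distrib_right sum.swap[of _ E])

lemma dotp_sum: "dotp n u (\<lambda>i. \<Sum>e\<in>E. f e i) = (\<Sum>e\<in>E. dotp n u (f e))"
  unfolding dotp_def by (simp add: sum_distrib_left sum.swap[of _ E])

lemma dotp_mmul_transp_mmul: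
  "dotp n w (mvec n (mmul n (transp S) (mmul n M S)) w) = dotp n (mvec n S w) (mvec n M (mvec n S w))"
  by (simp add: mvec_mmul dotp_mvec_transp)

lemma dotp_diagm_commute: "dotp n u (mvec n (diagm d) w) = dotp n w (mvec n (diagm d) u)"
  unfolding dotp_def mvec_def diagm_def
  by (simp add: if_distrib[of "\<lambda>x. x * _"] cong: if_cong) (simp add: algebra_simps)

lemma dotp_assemble:
  "dotp N u (mvec N (assemble K p M) w) =
     (\<Sum>e\<in>{1..K}. dotp p (mvec N (Rsel p e) u) (mvec p (M e) (mvec N (Rsel p e) w)))"
proof -
  have "mvec N (assemble K p M) w = (\<lambda>i. \<Sum>e\<in>{1..K}.
      mvec N (mmul p (transp (Rsel p e)) (mmul p (M e) (Rsel p e))) w i)"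
    unfolding assemble_def by (intro ext mvec_sum)
  then show ?thesis
    by (simp add: dotp_sum mvec_mmul dotp_mvec_transp)
qed

lemma mvec_Rsel:
  "mvec N (Rsel p e) u j = (if (e - 1) * p + j \<le> N then u ((e - 1) * p + j) else 0)"
  unfolding mvec_def Rsel_def by (simp add: if_distrib[of "\<lambda>x. x * _"] cong: if_cong)

lemma Pglob_commute: "dotp N u (mvec N (Pglob K p X) w) = dotp N w (mvec N (Pglob K p X) u)"
  unfolding Pglob_def Pe_def dotp_assemble by (intro sum.cong refl dotp_diagm_commute)

lemma Aglob_quadratic_form:
  "dotp (K * p) u (mvec (K * p) (Aglob K p X eps) u) = (\<Sum>e\<in>{1..K}. elem_diss K p X eps u e)"
  unfolding Aglob_def dotp_assemble dotp_mmul_transp_mmul elem_diss_def Let_def ..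

lemma Qglob_quadratic_form:
  assumes p: "p \<ge> 1" and mono: "\<forall>e<K. X e < X (Suc e)"
  shows "dotp (K * p) u (mvec (K * p) (Qglob K p X) u) = ((u (K * p))\<^sup>2 - (u 0)\<^sup>2) / 2"
proof -
  have "dotp (K * p) u (mvec (K * p) (Qglob K p X) u) =
     (\<Sum>e\<in>{1..K}. (u (e * p))\<^sup>2 / 2 - (u ((e - 1) * p))\<^sup>2 / 2)"
    unfolding Qglob_def dotp_assemble
  proof (intro sum.cong refl)
    fix e assume e: "e \<in> {1..K}"
    then have "e - 1 < K" by auto
    then have "X (e - 1) < X (Suc (e - 1))" using mono by blast
    then have X: "X (e - 1) < X e" using e by simp
    have "(e - 1) * p + p = e * p" "(e - 1) * p \<le> K * p" "e * p \<le> K * p"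
      using e by (auto simp: algebra_simps intro: le_trans[OF diff_le_self])
    then show "dotp p (mvec (K * p) (Rsel p e) u) (mvec p (Qe p X e) (mvec (K * p) (Rsel p e) u))
      = (u (e * p))\<^sup>2 / 2 - (u ((e - 1) * p))\<^sup>2 / 2"
      unfolding Qe_quadratic_form[OF p X] mvec_Rsel by (simp add: diff_divide_distrib)
  qed
  also have "\<dots> = ((u (K * p))\<^sup>2 - (u 0)\<^sup>2) / 2"
    using sum_telescope''[of 0 K "\<lambda>e. (u (e * p))\<^sup>2 / 2"] by (simp add: diff_divide_distrib)
  finally show ?thesis .
qed

lemma energy_rate:
  assumes p: "p \<ge> 1" and mono: "\<forall>e<K. X e < X (Suc e)"
    and ode: "\<And>i. i \<le> K * p \<Longrightarrow>
      mvec (K * p) (Pglob K p X) u' i + a * mvec (K * p) (Qglob K p X) u i =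
        - mvec (K * p) (Aglob K p X eps) u i - a * u 0 * unitv 0 i"
  shows "dotp (K * p) u (mvec (K * p) (Pglob K p X) u') + (\<Sum>e\<in>{1..K}. elem_diss K p X eps u e)
    = - a * ((u (K * p))\<^sup>2 + (u 0)\<^sup>2) / 2"
proof -
  let ?N = "K * p"
  have "mvec ?N (Pglob K p X) u' i =
      - a * mvec ?N (Qglob K p X) u i - mvec ?N (Aglob K p X eps) u i - a * u 0 * unitv 0 i"
    if "i \<le> ?N" for i
    using ode[OF that] by (simp add: algebra_simps)
  then have "dotp ?N u (mvec ?N (Pglob K p X) u') = dotp ?N u (\<lambda>i.
      - a * mvec ?N (Qglob K p X) u i - mvec ?N (Aglob K p X eps) u i - a * u 0 * unitv 0 i)"
    unfolding dotp_def by (intro sum.cong refl) simp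
  also have "\<dots> = - a * dotp ?N u (mvec ?N (Qglob K p X) u) - dotp ?N u (mvec ?N (Aglob K p X eps) u)
      - a * u 0 * dotp ?N u (unitv 0)"
    unfolding dotp_def by (simp add: algebra_simps sum.distrib sum_subtractf sum_distrib_left)
  also have "dotp ?N u (unitv 0) = u 0"
    unfolding dotp_def unitv_def by (simp add: if_distrib[of "\<lambda>x. _ * x"] cong: if_cong)
  finally show ?thesis
    unfolding Qglob_quadratic_form[OF p mono] Aglob_quadratic_form
    by (simp add: algebra_simps power2_eq_square)
qed

lemma dotp_mvec_has_real_derivative:
  assumes sym: "\<And>u w. dotp N u (mvec N M w) = dotp N w (mvec N M u)"
    and U: "\<And>j. j \<le> N \<Longrightarrow> ((\<lambda>s. U s j) has_real_derivative U' j) (at t within S)"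
  shows "((\<lambda>s. dotp N (U s) (mvec N M (U s))) has_real_derivative 2 * dotp N (U t) (mvec N M U'))
    (at t within S)"
proof -
  have "((\<lambda>s. dotp N (U s) (mvec N M (U s))) has_real_derivative
      dotp N U' (mvec N M (U t)) + dotp N (U t) (mvec N M U')) (at t within S)"
    unfolding dotp_def mvec_def
    by (auto intro!: derivative_eq_intros U simp: sum_distrib_left algebra_simps sum.distrib)
  then show ?thesis using sym[of U' "U t"] by simp
qed

lemma continuous_on_elem_diss:
  assumes "\<And>j. j \<le> K * p \<Longrightarrow> continuous_on S (\<lambda>s. U s j)"
    and "\<And>j. j \<le> K * p \<Longrightarrow> continuous_on S (\<lambda>s. eps s j)"
  shows "continuous_on S (\<lambda>s. elem_diss K p X (eps s) (U s) e)"
proof -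
  have "continuous_on S (\<lambda>s. msqrt (Ee K p (eps s) e) i j)" for i j
    unfolding msqrt_def Ee_def diagm_def mvec_def
    by (cases "i = j") (auto intro!: continuous_on_real_sqrt continuous_intros assms(2))
  then show ?thesis
    unfolding elem_diss_def Let_def dotp_def SDe_def mmul_def mvec_def
    by (auto intro!: continuous_intros assms(1))
qed

text \<open>The dissipation enters the energy functional \<open>E t + 2 \<integral>\<^sub>0\<^sup>t D\<close> exactly, so no sign
  condition on \<open>D\<close> (and hence on the diffusion coefficients) is needed.\<close>
lemma energy_dissipation_inequality:
  fixes E E' D :: "real \<Rightarrow> real"
  assumes T: "0 \<le> T"
    and E: "\<And>s. s \<in> {0..T} \<Longrightarrow> (E has_real_derivative E' s) (at s within {0..T})"
    and D: "continuous_on {0..T} D"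
    and rate: "\<And>s. s \<in> {0..T} \<Longrightarrow> E' s + 2 * D s \<le> 0"
  shows "E T + 2 * integral {0..T} D \<le> E 0"
proof -
  define F where "F s = E s + 2 * integral {0..s} D" for s
  have "(F has_derivative (*) (E' s + 2 * D s)) (at s within {0..T})" if "0 \<le> s" "s \<le> T" for s
    unfolding F_def has_field_derivative_def[symmetric] using that
    by (intro DERIV_add E DERIV_cmult integral_has_real_derivative D) auto
  from mvt_very_simple[OF T this] obtain s
    where "s \<in> {0..T}" "F T - F 0 = (E' s + 2 * D s) * (T - 0)"
    by blast
  moreover from this(1) have "(E' s + 2 * D s) * T \<le> 0"
    using rate T by (simp add: mult_nonpos_nonneg)
  ultimately have "F T \<le> F 0" by simp
  then show ?thesis unfolding F_def by simp
qed

lemma energy_estimate: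
  assumes p: "p \<ge> 1" and mono: "\<forall>e<K. X e < X (Suc e)" and a: "a \<ge> 0" and T: "0 \<le> T"
    and U_deriv: "\<And>s j. s \<in> {0..T} \<Longrightarrow> j \<le> K * p \<Longrightarrow>
      ((\<lambda>s. U s j) has_real_derivative U' s j) (at s within {0..T})"
    and eps_cont: "\<And>j. j \<le> K * p \<Longrightarrow> continuous_on {0..T} (\<lambda>s. eps s j)"
    and ode: "\<And>s i. s \<in> {0..T} \<Longrightarrow> i \<le> K * p \<Longrightarrow>
      mvec (K * p) (Pglob K p X) (U' s) i + a * mvec (K * p) (Qglob K p X) (U s) i =
        - mvec (K * p) (Aglob K p X (eps s)) (U s) i - a * U s 0 * unitv 0 i"
  shows "dotp (K * p) (U T) (mvec (K * p) (Pglob K p X) (U T))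
     + 2 * integral {0..T} (\<lambda>s. \<Sum>e\<in>{1..K}. elem_diss K p X (eps s) (U s) e)
     \<le> dotp (K * p) (U 0) (mvec (K * p) (Pglob K p X) (U 0))"
proof (rule energy_dissipation_inequality[OF T])
  show "((\<lambda>s. dotp (K * p) (U s) (mvec (K * p) (Pglob K p X) (U s))) has_real_derivative
      2 * dotp (K * p) (U s) (mvec (K * p) (Pglob K p X) (U' s))) (at s within {0..T})"
    if "s \<in> {0..T}" for s
    using U_deriv[OF that] by (intro dotp_mvec_has_real_derivative Pglob_commute)
  show "continuous_on {0..T} (\<lambda>s. \<Sum>e\<in>{1..K}. elem_diss K p X (eps s) (U s) e)"
    using DERIV_continuous_on[OF U_deriv] eps_cont
    by (intro continuous_on_sum continuous_on_elem_diss) auto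
  show "2 * dotp (K * p) (U s) (mvec (K * p) (Pglob K p X) (U' s))
      + 2 * (\<Sum>e\<in>{1..K}. elem_diss K p X (eps s) (U s) e) \<le> 0"
    if "s \<in> {0..T}" for s
  proof -
    have "dotp (K * p) (U s) (mvec (K * p) (Pglob K p X) (U' s))
        + (\<Sum>e\<in>{1..K}. elem_diss K p X (eps s) (U s) e)
        = - a * ((U s (K * p))\<^sup>2 + (U s 0)\<^sup>2) / 2"
      using that by (intro energy_rate[OF p mono] ode)
    moreover have "a * ((U s (K * p))\<^sup>2 + (U s 0)\<^sup>2) \<ge> 0" using a by simp
    ultimately show ?thesis by linarith
  qed
qed

theorem proposition4:
  fixes K p :: nat and X :: "nat \<Rightarrow> real" and a :: real
    and eps :: "real \<Rightarrow> nat \<Rightarrow> real"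
    and U U' :: "real \<Rightarrow> nat \<Rightarrow> real"
    and \<sigma>\<^sub>0 \<sigma>\<^sub>N g\<^sub>0 g\<^sub>N :: real
  assumes K: "K \<ge> 1" and p: "p \<ge> 1"
    and mesh0: "X 0 = 0" and meshK: "X K = 1"
    and mesh_mono: "\<forall>e<K. X e < X (Suc e)"
    and a: "a \<ge> 0"
    and eps_nonneg: "\<forall>j\<le>K * p. \<forall>t\<ge>0. eps t j \<ge> 0"
    and eps_cont: "\<forall>j\<le>K * p. continuous_on {0..} (\<lambda>t. eps t j)"
    and U_deriv: "\<forall>j\<le>K * p. \<forall>t\<ge>0.
                    ((\<lambda>s. U s j) has_real_derivative U' t j) (at t within {0..})"
    and U'_cont: "\<forall>j\<le>K * p. continuous_on {0..} (\<lambda>t. U' t j)"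
    and ode: "\<forall>t\<ge>0. \<forall>i\<le>K * p.
      (let N = K * p;
           \<delta>\<^sub>0 = mvec p (De p X 1) (mvec N (Rsel p 1) (U t)) 0;
           \<delta>\<^sub>N = mvec p (De p X K) (mvec N (Rsel p K) (U t)) p
       in mvec N (Pglob K p X) (U' t) i + a * mvec N (Qglob K p X) (U t) i =
            - mvec N (Aglob K p X (eps t)) (U t) i
            - eps t 0 * \<delta>\<^sub>0 * unitv 0 i + eps t N * \<delta>\<^sub>N * unitv N i
            + \<sigma>\<^sub>0 * unitv 0 i * (a * U t 0 - eps t 0 * \<delta>\<^sub>0 - g\<^sub>0)
            + \<sigma>\<^sub>N * unitv N i * (- eps t N * \<delta>\<^sub>N - g\<^sub>N))"
    and sig0: "\<sigma>\<^sub>0 = -1" and sigN: "\<sigma>\<^sub>N = 1"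
    and g0: "g\<^sub>0 = 0" and gN: "g\<^sub>N = 0"
  shows "\<forall>t\<ge>0.
     dotp (K * p) (U t) (mvec (K * p) (Pglob K p X) (U t))
     + 2 * integral {0..t} (\<lambda>s. \<Sum>e\<in>{1..K}. elem_diss K p X (eps s) (U s) e)
     \<le> dotp (K * p) (U 0) (mvec (K * p) (Pglob K p X) (U 0))"
proof (intro allI impI)
  fix T :: real assume T: "T \<ge> 0"
  have sub: "{0..T} \<subseteq> {0..}" by auto
  have "((\<lambda>s. U s j) has_real_derivative U' s j) (at s within {0..T})"
    if "s \<in> {0..T}" "j \<le> K * p" for s j
    using U_deriv that DERIV_subset[OF _ sub] by auto
  moreover have "continuous_on {0..T} (\<lambda>s. eps s j)" if "j \<le> K * p" for j
    using eps_cont that continuous_on_subset[OF _ sub] by auto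
  text \<open>With \<open>\<sigma>\<^sub>0 = -1\<close>, \<open>\<sigma>\<^sub>N = 1\<close> and \<open>g\<^sub>0 = g\<^sub>N = 0\<close> the penalties cancel the
    diffusive boundary fluxes, leaving only the inflow term at \<open>x = 0\<close>.\<close>
  moreover have "mvec (K * p) (Pglob K p X) (U' s) i + a * mvec (K * p) (Qglob K p X) (U s) i =
      - mvec (K * p) (Aglob K p X (eps s)) (U s) i - a * U s 0 * unitv 0 i"
    if "s \<in> {0..T}" "i \<le> K * p" for s i
    using ode[rule_format, of s i] that by (simp add: Let_def sig0 sigN g0 gN algebra_simps)
  ultimately show "dotp (K * p) (U T) (mvec (K * p) (Pglob K p X) (U T))
     + 2 * integral {0..T} (\<lambda>s. \<Sum>e\<in>{1..K}. elem_diss K p X (eps s) (U s) e)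
     \<le> dotp (K * p) (U 0) (mvec (K * p) (Pglob K p X) (U 0))"
    by (rule energy_estimate[OF p mesh_mono a T])
qed

end
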